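(* Let $P$ be a finite poset and $t\geq 2$, $n\geq 2$ integers. Suppose $\mathcal{F}\subseteq[t]^n$ is induced $P$-saturated and $i\in[n]$ is not separating for $\mathcal{F}$. Then $D_i(\mathcal{F})=\{D_i(f):f\in\mathcal{F}\}$ is an induced $P$-saturated family in $[t]^{n-1}$.
   Context: $[n]=\{1,\dots,n\}$; $[t]^n$ is the set of functions $f:[n]\to[t]$ ordered by $f\leq g$ iff $f(j)\leq g(j)$ for all $j$. An induced copy of $P$ in $\mathcal{F}\subseteq[t]^n$ is an injective map $\phi:P\to\mathcal{F}$ with $\phi(x)\leq\phi(y)$ iff $x\leq_P y$. $\mathcal{F}$ is induced $P$-saturated if it contains no induced copy of $P$ and for every $f\in[t]^n\setminus\mathcal{F}$, $\mathcal{F}\cup\{f\}$ contains an induced copy of $P$. For $f\in[t]^n$, $D_i(f)\in[t]^{n-1}$ is given by $D_i(f)(x)=f(x)$ for $x<i$ and $D_i(f)(x)=f(x+1)$ for $i\leq x\leq n-1$. Coordinate $i$ is separating for $\mathcal{F}$ if there exist distinct $f,f'\in\mathcal{F}$ with $D_i(f)\leq D_i(f')$ and $f(i)>f'(i)$. *)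

theory Defs
  imports Main
begin

text \<open>Elements of [t]^n are represented as functions nat => nat that take values
in {1..t} on {1..n} and are 0 outside {1..n} (canonical representatives).\<close>

definition grid :: "nat \<Rightarrow> nat \<Rightarrow> (nat \<Rightarrow> nat) set" where
  "grid t n = {f. (\<forall>j\<in>{1..n}. f j \<in> {1..t}) \<and> (\<forall>j. j \<notin> {1..n} \<longrightarrow> f j = 0)}"

definition gleq :: "nat \<Rightarrow> (nat \<Rightarrow> nat) \<Rightarrow> (nat \<Rightarrow> nat) \<Rightarrow> bool" where
  "gleq n f g = (\<forall>j\<in>{1..n}. f j \<le> g j)"

definition Del :: "nat \<Rightarrow> nat \<Rightarrow> (nat \<Rightarrow> nat) \<Rightarrow> (nat \<Rightarrow> nat)" where
  "Del n i f = (\<lambda>x. if x < i then f x else if i \<le> x \<and> x \<le> n - 1 then f (x + 1) else 0)"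

definition has_induced_copy :: "('a \<Rightarrow> 'a \<Rightarrow> bool) \<Rightarrow> nat \<Rightarrow> (nat \<Rightarrow> nat) set \<Rightarrow> bool" where
  "has_induced_copy leP n F =
     (\<exists>\<phi> :: 'a \<Rightarrow> (nat \<Rightarrow> nat). inj \<phi> \<and> range \<phi> \<subseteq> F \<and>
        (\<forall>x y. gleq n (\<phi> x) (\<phi> y) \<longleftrightarrow> leP x y))"

definition induced_saturated :: "('a \<Rightarrow> 'a \<Rightarrow> bool) \<Rightarrow> nat \<Rightarrow> nat \<Rightarrow> (nat \<Rightarrow> nat) set \<Rightarrow> bool" where
  "induced_saturated leP t n F =
     (F \<subseteq> grid t n \<and> \<not> has_induced_copy leP n F \<and>
      (\<forall>f \<in> grid t n - F. has_induced_copy leP n (insert f F)))"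

definition separating :: "nat \<Rightarrow> nat \<Rightarrow> (nat \<Rightarrow> nat) set \<Rightarrow> bool" where
  "separating n i F =
     (\<exists>f\<in>F. \<exists>f'\<in>F. f \<noteq> f' \<and> gleq (n - 1) (Del n i f) (Del n i f') \<and> f i > f' i)"

end

theory Submission
  imports Defs
begin

text \<open>If coordinate \<open>i\<close> is not separating, the order on \<open>F\<close> is already determined by the
other coordinates, so \<open>D\<^sub>i\<close> is an order embedding of \<open>F\<close> and induced copies of \<open>P\<close> in \<open>F\<close> and
in \<open>D\<^sub>i(F)\<close> correspond. For saturation, given \<open>g \<notin> D\<^sub>i(F)\<close>, lift \<open>g\<close> to \<open>[t]\<^sup>n\<close> by giving
coordinate \<open>i\<close> a value \<open>c\<close> lying above the \<open>i\<close>-th coordinates of all \<open>h \<in> F\<close> with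
\<open>D\<^sub>i(h) \<le> g\<close> and below those with \<open>g \<le> D\<^sub>i(h)\<close>; such \<open>c\<close> exists by transitivity because \<open>i\<close>
is not separating. Then \<open>i\<close> is still not separating for \<open>F\<close> together with the lift, so the
induced copy created by adding the lift maps to one created by adding \<open>g\<close>.\<close>

lemma gleq_refl: "gleq n f f"
  unfolding gleq_def by simp

lemma gleq_trans: "gleq n f g \<Longrightarrow> gleq n g h \<Longrightarrow> gleq n f h"
  unfolding gleq_def using le_trans by blast

lemma grid_gleq_antisym:
  assumes "f \<in> grid t n" "g \<in> grid t n" "gleq n f g" "gleq n g f"
  shows "f = g"
proof
  fix j
  show "f j = g j"
  proof (cases "j \<in> {1..n}")
    case True
    then show ?thesis using assms(3,4) unfolding gleq_def by (meson antisym)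
  next
    case False
    then show ?thesis using assms(1,2) unfolding grid_def by auto
  qed
qed

lemma Del_in_grid:
  assumes "i \<in> {1..n}" "f \<in> grid t n"
  shows "Del n i f \<in> grid t (n - 1)"
  using assms unfolding grid_def Del_def by auto

lemma gleq_iff_gleq_Del:
  assumes i: "i \<in> {1..n}"
  shows "gleq n f g \<longleftrightarrow> gleq (n - 1) (Del n i f) (Del n i g) \<and> f i \<le> g i"
proof
  assume "gleq n f g"
  then show "gleq (n - 1) (Del n i f) (Del n i g) \<and> f i \<le> g i"
    using i unfolding gleq_def Del_def by auto
next
  assume h: "gleq (n - 1) (Del n i f) (Del n i g) \<and> f i \<le> g i"
  show "gleq n f g"
    unfolding gleq_def
  proof
    fix j assume j: "j \<in> {1..n}"
    consider "j < i" | "j = i" | "j > i" by linarith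
    then show "f j \<le> g j"
    proof cases
      case 1
      then have "j \<in> {1..n - 1}" using j i by auto
      then show ?thesis using h 1 unfolding gleq_def Del_def by force
    next
      case 2
      then show ?thesis using h by simp
    next
      case 3
      then have "j - 1 \<in> {1..n - 1}" using j i by auto
      then have "Del n i f (j - 1) \<le> Del n i g (j - 1)" using h unfolding gleq_def by blast
      moreover have "Del n i f (j - 1) = f j" "Del n i g (j - 1) = g j"
        using 3 j unfolding Del_def by auto
      ultimately show ?thesis by simp
    qed
  qed
qed

lemma not_separating_iff:
  "\<not> separating n i F \<longleftrightarrow>
     (\<forall>f\<in>F. \<forall>g\<in>F. gleq (n - 1) (Del n i f) (Del n i g) \<longrightarrow> f i \<le> g i)"
  unfolding separating_def by (metis le_refl not_le)

lemma has_induced_copy_image_iff: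
  assumes inj: "inj_on D S"
    and ord: "\<And>a b. a \<in> S \<Longrightarrow> b \<in> S \<Longrightarrow> gleq m (D a) (D b) \<longleftrightarrow> gleq n a b"
  shows "has_induced_copy leP m (D ` S) \<longleftrightarrow> has_induced_copy leP n S"
proof
  assume "has_induced_copy leP n S"
  then obtain \<phi> where \<phi>: "inj \<phi>" "range \<phi> \<subseteq> S" "\<forall>x y. gleq n (\<phi> x) (\<phi> y) \<longleftrightarrow> leP x y"
    unfolding has_induced_copy_def by blast
  have "inj (D \<circ> \<phi>)" using \<phi> inj by (meson comp_inj_on inj_on_subset)
  moreover have "range (D \<circ> \<phi>) \<subseteq> D ` S" using \<phi> by auto
  moreover have "gleq m ((D \<circ> \<phi>) x) ((D \<circ> \<phi>) y) \<longleftrightarrow> leP x y" for x y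
    using \<phi> ord[of "\<phi> x" "\<phi> y"] by auto
  ultimately show "has_induced_copy leP m (D ` S)"
    unfolding has_induced_copy_def by blast
next
  assume "has_induced_copy leP m (D ` S)"
  then obtain \<psi> where \<psi>: "inj \<psi>" "range \<psi> \<subseteq> D ` S" "\<forall>x y. gleq m (\<psi> x) (\<psi> y) \<longleftrightarrow> leP x y"
    unfolding has_induced_copy_def by blast
  define \<phi> where "\<phi> = inv_into S D \<circ> \<psi>"
  have range_\<phi>: "range \<phi> \<subseteq> S"
    unfolding \<phi>_def using \<psi>(2) inv_into_into[of _ D S] by (simp add: image_subset_iff)
  have D_\<phi>: "D (\<phi> x) = \<psi> x" for x
    unfolding \<phi>_def using \<psi>(2) f_inv_into_f[of _ D S] by (simp add: image_subset_iff)
  have "inj \<phi>" by (metis D_\<phi> injI \<psi>(1) injD)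
  moreover have "gleq n (\<phi> x) (\<phi> y) \<longleftrightarrow> leP x y" for x y
    using range_\<phi> ord[of "\<phi> x" "\<phi> y"] D_\<phi> \<psi>(3) by auto
  ultimately show "has_induced_copy leP n S"
    using range_\<phi> unfolding has_induced_copy_def by blast
qed

lemma gleq_Del_iff_gleq:
  assumes "i \<in> {1..n}" "\<not> separating n i S" "f \<in> S" "g \<in> S"
  shows "gleq (n - 1) (Del n i f) (Del n i g) \<longleftrightarrow> gleq n f g"
  using assms gleq_iff_gleq_Del not_separating_iff by metis

lemma inj_on_Del:
  assumes "i \<in> {1..n}" "S \<subseteq> grid t n" "\<not> separating n i S"
  shows "inj_on (Del n i) S"
proof (rule inj_onI)
  fix f g assume fg: "f \<in> S" "g \<in> S" "Del n i f = Del n i g"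
  then have "gleq n f g" "gleq n g f"
    using assms gleq_Del_iff_gleq gleq_refl by metis+
  then show "f = g" using grid_gleq_antisym fg assms(2) by blast
qed

lemma has_induced_copy_Del_image_iff:
  assumes "i \<in> {1..n}" "S \<subseteq> grid t n" "\<not> separating n i S"
  shows "has_induced_copy leP (n - 1) (Del n i ` S) \<longleftrightarrow> has_induced_copy leP n S"
  using has_induced_copy_image_iff[OF inj_on_Del[OF assms]] gleq_Del_iff_gleq assms by blast

definition Ins :: "nat \<Rightarrow> nat \<Rightarrow> nat \<Rightarrow> (nat \<Rightarrow> nat) \<Rightarrow> (nat \<Rightarrow> nat)" where
  "Ins n i c g = (\<lambda>x. if x < i then g x else if x = i then c else if x \<le> n then g (x - 1) else 0)"

lemma Ins_at: "Ins n i c g i = c"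
  unfolding Ins_def by simp

lemma Del_Ins:
  assumes "i \<in> {1..n}" "g \<in> grid t (n - 1)"
  shows "Del n i (Ins n i c g) = g"
  using assms unfolding Del_def Ins_def grid_def by fastforce

lemma Ins_in_grid:
  assumes i: "i \<in> {1..n}" and g: "g \<in> grid t (n - 1)" and c: "c \<in> {1..t}"
  shows "Ins n i c g \<in> grid t n"
  unfolding grid_def
proof (intro CollectI conjI ballI allI impI)
  fix j assume j: "j \<in> {1..n}"
  consider "j < i" | "j = i" | "j > i" by linarith
  then show "Ins n i c g j \<in> {1..t}"
  proof cases
    case 1
    then have "j \<in> {1..n - 1}" using j i by auto
    then show ?thesis using g 1 unfolding Ins_def grid_def by auto
  next
    case 2
    then show ?thesis using c unfolding Ins_def by auto
  next
    case 3
    then have "j - 1 \<in> {1..n - 1}" using j i by auto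
    then show ?thesis using g 3 j unfolding Ins_def grid_def by auto
  qed
next
  fix j assume "j \<notin> {1..n}"
  then show "Ins n i c g j = 0" using g i unfolding Ins_def grid_def by auto
qed

lemma exists_threshold_value:
  assumes t: "t \<ge> 1" and i: "i \<in> {1..n}" and F: "F \<subseteq> grid t n"
    and ns: "\<not> separating n i F"
  obtains c where "c \<in> {1..t}"
    and "\<And>h. h \<in> F \<Longrightarrow> gleq (n - 1) (Del n i h) g \<Longrightarrow> h i \<le> c"
    and "\<And>h. h \<in> F \<Longrightarrow> gleq (n - 1) g (Del n i h) \<Longrightarrow> c \<le> h i"
proof
  define C where "C = insert 1 {h i | h. h \<in> F \<and> gleq (n - 1) (Del n i h) g}"
  have C_sub: "C \<subseteq> {1..t}" unfolding C_def using F i t unfolding grid_def by auto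
  then have fin: "finite C" using finite_subset by blast
  show "Max C \<in> {1..t}" using C_sub Max_in[OF fin] C_def by blast
  show "h i \<le> Max C" if "h \<in> F" "gleq (n - 1) (Del n i h) g" for h
    using fin that C_def by (auto intro!: Max_ge)
  show "Max C \<le> h i" if h: "h \<in> F" "gleq (n - 1) g (Del n i h)" for h
  proof (subst Max_le_iff[OF fin])
    show "C \<noteq> {}" unfolding C_def by simp
    have "1 \<le> h i" using h F i unfolding grid_def by auto
    moreover have "h' i \<le> h i" if "h' \<in> F" "gleq (n - 1) (Del n i h') g" for h'
      using ns h that gleq_trans unfolding not_separating_iff by blast
    ultimately show "\<forall>a\<in>C. a \<le> h i" unfolding C_def by blast
  qed
qed

lemma exists_lift_not_separating:
  assumes t: "t \<ge> 1" and i: "i \<in> {1..n}" and F: "F \<subseteq> grid t n"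
    and g: "g \<in> grid t (n - 1)" and ns: "\<not> separating n i F"
  obtains f where "f \<in> grid t n" "Del n i f = g" "\<not> separating n i (insert f F)"
proof -
  obtain c where c: "c \<in> {1..t}"
    and below: "\<And>h. h \<in> F \<Longrightarrow> gleq (n - 1) (Del n i h) g \<Longrightarrow> h i \<le> c"
    and above: "\<And>h. h \<in> F \<Longrightarrow> gleq (n - 1) g (Del n i h) \<Longrightarrow> c \<le> h i"
    using exists_threshold_value[OF t i F ns] by blast
  let ?f = "Ins n i c g"
  have "Del n i ?f = g" using Del_Ins[OF i g] .
  moreover have "\<not> separating n i (insert ?f F)"
    using ns below above \<open>Del n i ?f = g\<close> Ins_at[of n i c g]
    unfolding not_separating_iff by auto
  ultimately show thesis using that Ins_in_grid[OF i g c] by blast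
qed

theorem mainTheorem13:
  fixes F :: "(nat \<Rightarrow> nat) set" and t n i :: nat
    and P :: "'a :: {order, finite} itself"
  assumes "t \<ge> 2" and "n \<ge> 2" and "i \<in> {1..n}"
    and "induced_saturated ((\<le>) :: 'a \<Rightarrow> 'a \<Rightarrow> bool) t n F"
    and "\<not> separating n i F"
  shows "induced_saturated ((\<le>) :: 'a \<Rightarrow> 'a \<Rightarrow> bool) t (n - 1) (Del n i ` F)"
proof -
  have F: "F \<subseteq> grid t n"
    and no_copy: "\<not> has_induced_copy ((\<le>) :: 'a \<Rightarrow> 'a \<Rightarrow> bool) n F"
    and sat: "\<forall>f \<in> grid t n - F. has_induced_copy ((\<le>) :: 'a \<Rightarrow> 'a \<Rightarrow> bool) n (insert f F)"
    using assms(4) unfolding induced_saturated_def by auto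
  have "has_induced_copy ((\<le>) :: 'a \<Rightarrow> 'a \<Rightarrow> bool) (n - 1) (insert g (Del n i ` F))"
    if g: "g \<in> grid t (n - 1) - Del n i ` F" for g
  proof -
    obtain f where f: "f \<in> grid t n" "Del n i f = g" "\<not> separating n i (insert f F)"
      using exists_lift_not_separating[of t i n F g] assms g F by auto
    then have "has_induced_copy ((\<le>) :: 'a \<Rightarrow> 'a \<Rightarrow> bool) n (insert f F)"
      using sat g by auto
    moreover have "insert f F \<subseteq> grid t n" using f F by blast
    ultimately show ?thesis
      using has_induced_copy_Del_image_iff[OF assms(3) _ f(3)] f(2) by auto
  qed
  moreover have "Del n i ` F \<subseteq> grid t (n - 1)" using Del_in_grid[OF assms(3)] F by auto
  ultimately show ?thesis
    using has_induced_copy_Del_image_iff[OF assms(3) F assms(5)] no_copy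
    unfolding induced_saturated_def by blast
qed

end
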